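(* Let $I$ and $J$ be finite sets, let $g\in\mathbb{R}^J$, and for each $i\in I$ let $u_i:\mathbb{R}^J\to\mathbb{R}\cup\{-\infty\}$ be upper semicontinuous and concave with $u_i(x_i+rg)>u_i(x_i)$ for all $x_i\in\mathrm{dom}\,u_i$ and $r>0$. Let $x\in\mathbb{R}^{I\times J}$ be an allocation, define $D_i(y_i):=\sup\{r\in\mathbb{R}\mid u_i(x_i+y_i-rg)\ge u_i(x_i)\}$, and assume there is $\varepsilon>0$ such that for every $z\in\mathbb{R}^J$ with $|z|\le\varepsilon$ the optimal value of "maximize $\sum_{i\in I}D_i(y_i)$ over $y\in\mathbb{R}^{I\times J}$ subject to $\sum_{i\in I}y_i=z$" is finite. (1) If $x$ is Pareto efficient, then there is $p\in\mathbb{R}^J$ with $g\cdot p=1$ such that, for all $i\in I$, $p\cdot w_i\ge p\cdot x_i$ for all $w_i\in\mathbb{R}^J$ with $u_i(w_i)\ge u_i(x_i)$. (2) Conversely, if in addition each $u_i$ satisfies: whenever $u_i(y_i)>u_i(y_i')$ for some $y_i'\in\mathrm{dom}\,u_i$, then $y_i-\varepsilon' g\in\mathrm{dom}\,u_i$ for all small enough $\varepsilon'>0$, then the existence of such a price vector $p$ implies that $x$ is Pareto efficient.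
   Context: $\mathrm{dom}\,u_i=\{x\mid u_i(x)>-\infty\}$. Feasibility of allocations refers to the total $\sum_{i\in I}x_i$: an allocation $x'$ is feasible if $\sum_i x'_i=\sum_i x_i$, and $x$ is Pareto efficient if there is no feasible $x'$ with $u_i(x'_i)\ge u_i(x_i)$ for all $i$ and strict inequality for some $i$. *)

theory Defs
  imports "HOL-Analysis.Analysis" "HOL-Library.Extended_Real"
begin

text \<open>Extended-real valued functions R^J -> R \<union> {-\<infinity>} are modelled as
  functions into ereal that never take the value +\<infinity>.\<close>

definition edom :: "('a \<Rightarrow> ereal) \<Rightarrow> 'a set" where
  "edom u = {x. u x > -\<infinity>}"

definition usc_ext :: "('a::topological_space \<Rightarrow> ereal) \<Rightarrow> bool" where
  "usc_ext u \<longleftrightarrow> (\<forall>c::ereal. closed {x. c \<le> u x})"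

definition concave_ext :: "('a::real_vector \<Rightarrow> ereal) \<Rightarrow> bool" where
  "concave_ext u \<longleftrightarrow> convex {(x, r::real). ereal r \<le> u x}"

definition pareto_efficient ::
  "('i::finite \<Rightarrow> 'v::comm_monoid_add \<Rightarrow> ereal) \<Rightarrow> ('i \<Rightarrow> 'v) \<Rightarrow> bool" where
  "pareto_efficient u x \<longleftrightarrow>
     \<not> (\<exists>x'. (\<Sum>i\<in>UNIV. x' i) = (\<Sum>i\<in>UNIV. x i) \<and>
            (\<forall>i. u i (x' i) \<ge> u i (x i)) \<and> (\<exists>i. u i (x' i) > u i (x i)))"

text \<open>D_i(y_i) = sup {r. u_i(x_i + y_i - r g) \<ge> u_i(x_i)} (sup of the empty set is -\<infinity>).\<close>
definition Dfun :: "('v::real_vector \<Rightarrow> ereal) \<Rightarrow> 'v \<Rightarrow> 'v \<Rightarrow> 'v \<Rightarrow> ereal" where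
  "Dfun ui g xi yi = Sup (ereal ` {r::real. ui (xi + yi - r *\<^sub>R g) \<ge> ui xi})"

text \<open>Optimal value of: maximize \<Sum>i D_i(y_i) subject to \<Sum>i y_i = z
  (concave maximization: points where some D_i(y_i) = -\<infinity> are infeasible).\<close>
definition opt_value ::
  "('i::finite \<Rightarrow> 'v::real_vector \<Rightarrow> ereal) \<Rightarrow> 'v \<Rightarrow> ('i \<Rightarrow> 'v) \<Rightarrow> 'v \<Rightarrow> ereal" where
  "opt_value u g x z = Sup {(\<Sum>i\<in>UNIV. Dfun (u i) g (x i) (y i)) | y.
       (\<Sum>i\<in>UNIV. y i) = z \<and> (\<forall>i. Dfun (u i) g (x i) (y i) > -\<infinity>)}"

end

theory Submission
  imports Defs
begin

text \<open>
  Efficiency gives prices by separation. If x is Pareto efficient, 0 is not in the convex set of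
  aggregate trades \<open>\<Sum>w - \<Sum>x + r g\<close> (\<open>r > 0\<close>) that leave every agent weakly better off, since
  sharing \<open>r g\<close> equally would make everyone strictly better off. A functional a separating this
  set from 0 satisfies \<open>a \<bullet> (\<Sum>w - \<Sum>x) \<ge> 0\<close> for all such w, and \<open>a /\<^sub>R (a \<bullet> g)\<close> is the price.
  That \<open>a \<bullet> g > 0\<close> comes from the finite optimal values: at \<open>z = -\<epsilon> a / |a|\<close> a feasible point
  yields weakly improving w with \<open>\<Sum>w - \<Sum>x = z - s g\<close>, so \<open>a \<bullet> g = 0\<close> would give
  \<open>0 \<le> a \<bullet> z < 0\<close>. The value at \<open>z = 0\<close> is finite only if every \<open>u\<^sub>i(x\<^sub>i) > -\<infinity>\<close>, as
  otherwise \<open>D\<^sub>i \<equiv> \<infinity>\<close>.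

  Conversely, at a supporting price an improving reallocation x' costs each agent at least as
  much as \<open>x\<^sub>i\<close> and the same in total, hence exactly as much. By the domain condition and
  concavity the strictly better-off agent k can give up a small multiple of g and still be at
  least as well off as at \<open>x\<^sub>k\<close>, at a strictly lower cost than \<open>x\<^sub>k\<close>.
\<close>

lemma concave_ext_superlevel_convex:
  assumes "concave_ext f"
  shows "convex {w. c \<le> f w}"
proof -
  have hypo: "convex {(x, r::real). ereal r \<le> f x}"
    using assms unfolding concave_ext_def .
  have real_level: "convex {w. ereal r \<le> f w}" for r
  proof (rule convexI)
    fix a b and s t :: real
    assume "a \<in> {w. ereal r \<le> f w}" "b \<in> {w. ereal r \<le> f w}" "0 \<le> s" "0 \<le> t" "s + t = 1"
    then have "s *\<^sub>R (a, r) + t *\<^sub>R (b, r) \<in> {(x, r). ereal r \<le> f x}"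
      by (intro convexD[OF hypo]) auto
    then show "s *\<^sub>R a + t *\<^sub>R b \<in> {w. ereal r \<le> f w}"
      using \<open>s + t = 1\<close> by (simp flip: distrib_right)
  qed
  have "{w. c \<le> f w} = (\<Inter>r\<in>{r. ereal r < c}. {w. ereal r \<le> f w})"
    by (auto intro: less_imp_le order.strict_trans2) (metis ereal_dense2 leD leI)
  then show ?thesis
    using real_level by (simp add: convex_INT)
qed

lemma concave_ext_eventually_segment:
  assumes "concave_ext f" and "ereal A \<le> f a" and "ereal B \<le> f b" and "C < A"
  shows "\<forall>\<^sub>F t in at_right 0. ereal C \<le> f ((1 - t) *\<^sub>R a + t *\<^sub>R b)"
proof -
  have hypo: "convex {(x, r::real). ereal r \<le> f x}"
    using assms(1) unfolding concave_ext_def .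
  have "((\<lambda>t. (1 - t) * A + t * B) \<longlongrightarrow> (1 - 0) * A + 0 * B) (at_right 0)"
    by (intro tendsto_intros)
  then have "\<forall>\<^sub>F t in at_right 0. C < (1 - t) * A + t * B"
    using \<open>C < A\<close> by (auto dest: order_tendstoD(1))
  moreover have "\<forall>\<^sub>F t in at_right (0::real). 0 < t \<and> t < 1"
    by (rule eventually_at_rightI[of _ 1]) auto
  ultimately show ?thesis
  proof eventually_elim
    case (elim t)
    then have "(1 - t) *\<^sub>R (a, A) + t *\<^sub>R (b, B) \<in> {(x, r). ereal r \<le> f x}"
      using assms(2,3) by (intro convexD[OF hypo]) auto
    then show ?case
      using elim by (auto elim: order_trans[rotated])
  qed
qed

lemma concave_ext_superlevel_shift:
  assumes "concave_ext f" and "c < f a"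
    and "\<forall>\<^sub>F e in at_right 0. a - e *\<^sub>R g \<in> edom f"
  shows "\<exists>e>0. c \<le> f (a - e *\<^sub>R g)"
proof -
  have "\<forall>\<^sub>F e in at_right (0::real). 0 < e \<and> a - e *\<^sub>R g \<in> edom f"
    using eventually_at_right_less assms(3) by (rule eventually_conj)
  then obtain e where "0 < e" and "a - e *\<^sub>R g \<in> edom f"
    by (auto dest: eventually_happens)
  then have "-\<infinity> < f (a - e *\<^sub>R g)"
    unfolding edom_def by blast
  then obtain B where B: "ereal B \<le> f (a - e *\<^sub>R g)"
    using ereal_dense2 less_imp_le by blast
  obtain A C where "c < ereal C" "ereal C < ereal A" "ereal A < f a"
    using \<open>c < f a\<close> by (meson ereal_dense2)
  then have "\<forall>\<^sub>F t in at_right 0. ereal C \<le> f ((1 - t) *\<^sub>R a + t *\<^sub>R (a - e *\<^sub>R g))"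
    by (intro concave_ext_eventually_segment[OF assms(1) _ B]) auto
  with eventually_at_right_less
  have "\<forall>\<^sub>F t in at_right (0::real). 0 < t \<and> ereal C \<le> f ((1 - t) *\<^sub>R a + t *\<^sub>R (a - e *\<^sub>R g))"
    by (rule eventually_conj)
  then obtain t where "0 < t" "ereal C \<le> f ((1 - t) *\<^sub>R a + t *\<^sub>R (a - e *\<^sub>R g))"
    by (auto dest: eventually_happens)
  moreover have "(1 - t) *\<^sub>R a + t *\<^sub>R (a - e *\<^sub>R g) = a - (t * e) *\<^sub>R g"
    by (simp add: algebra_simps)
  ultimately show ?thesis
    using \<open>0 < e\<close> \<open>c < ereal C\<close> by (intro exI[of _ "t * e"]) auto
qed

lemma Dfun_zero_nonneg: "0 \<le> Dfun ui g xi 0"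
  unfolding Dfun_def by (rule Sup_upper2[of "ereal 0"]) auto

lemma Dfun_eq_PInfty: "ui xi = -\<infinity> \<Longrightarrow> Dfun ui g xi yi = \<infinity>"
  unfolding Dfun_def by (simp add: Sup_upper ereal_top)

lemma opt_value_lower_bound:
  assumes "(\<Sum>i\<in>UNIV. y i) = z" and "\<And>i. -\<infinity> < Dfun (u i) g (x i) (y i)"
  shows "(\<Sum>i\<in>UNIV. Dfun (u i) g (x i) (y i)) \<le> opt_value u g x z"
  unfolding opt_value_def using assms by (intro Sup_upper) blast

lemma edom_if_opt_value_zero_neq_PInfty:
  assumes "opt_value u g x 0 \<noteq> \<infinity>"
  shows "x i \<in> edom (u i)"
proof (rule ccontr)
  assume "x i \<notin> edom (u i)"
  then have "Dfun (u i) g (x i) 0 = \<infinity>"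
    by (simp add: edom_def Dfun_eq_PInfty)
  then have "(\<Sum>j\<in>UNIV. Dfun (u j) g (x j) 0) = \<infinity>"
    by (subst sum_Pinfty) auto
  moreover have "-\<infinity> < Dfun (u j) g (x j) 0" for j
    using Dfun_zero_nonneg by (rule less_le_trans[rotated]) simp
  ultimately have "\<infinity> \<le> opt_value u g x 0"
    using opt_value_lower_bound[of "\<lambda>_. 0" 0 u g x] by simp
  with assms show False
    by simp
qed

lemma opt_value_neq_MInfty_imp_absorbable:
  assumes "opt_value u g x z \<noteq> -\<infinity>"
  shows "\<exists>w s. (\<Sum>i\<in>UNIV. w i) + s *\<^sub>R g = (\<Sum>i\<in>UNIV. x i) + z \<and> (\<forall>i. u i (x i) \<le> u i (w i))"
proof -
  obtain y where "(\<Sum>i\<in>UNIV. y i) = z" and "\<And>i. -\<infinity> < Dfun (u i) g (x i) (y i)"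
    using assms unfolding opt_value_def by (auto simp flip: bot_ereal_def)
  moreover have "\<exists>r. u i (x i) \<le> u i (x i + y i - r *\<^sub>R g)"
    if "-\<infinity> < Dfun (u i) g (x i) (y i)" for i
    using that bot.not_eq_extremum unfolding Dfun_def by (fastforce simp flip: bot_ereal_def)
  ultimately obtain r where r: "\<And>i. u i (x i) \<le> u i (x i + y i - r i *\<^sub>R g)"
    by metis
  have "(\<Sum>i\<in>UNIV. x i + y i - r i *\<^sub>R g) + (\<Sum>i\<in>UNIV. r i) *\<^sub>R g = (\<Sum>i\<in>UNIV. x i) + z"
    using \<open>(\<Sum>i\<in>UNIV. y i) = z\<close> by (simp add: sum.distrib sum_subtractf scaleR_sum_left)
  with r show ?thesis
    by blast
qed

lemma supporting_price_imp_pareto_efficient: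
  fixes u :: "'i::finite \<Rightarrow> 'v::real_inner \<Rightarrow> ereal"
  assumes conc: "\<And>i. concave_ext (u i)"
    and edom_down: "\<And>i y. \<exists>y'\<in>edom (u i). u i y' < u i y \<Longrightarrow>
      \<forall>\<^sub>F e in at_right 0. y - e *\<^sub>R g \<in> edom (u i)"
    and xdom: "\<And>i. x i \<in> edom (u i)"
    and "0 < g \<bullet> p"
    and supp: "\<And>i w. u i (x i) \<le> u i w \<Longrightarrow> p \<bullet> x i \<le> p \<bullet> w"
  shows "pareto_efficient u x"
  unfolding pareto_efficient_def
proof
  assume "\<exists>x'. (\<Sum>i\<in>UNIV. x' i) = (\<Sum>i\<in>UNIV. x i) \<and>
            (\<forall>i. u i (x' i) \<ge> u i (x i)) \<and> (\<exists>i. u i (x' i) > u i (x i))"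
  then obtain x' k where feasible: "(\<Sum>i\<in>UNIV. x' i) = (\<Sum>i\<in>UNIV. x i)"
    and weak: "\<And>i. u i (x i) \<le> u i (x' i)" and strict: "u k (x k) < u k (x' k)"
    by blast
  have "(\<Sum>i\<in>UNIV. p \<bullet> x' i - p \<bullet> x i) = 0"
    using feasible by (simp add: sum_subtractf flip: inner_sum_right)
  then have same_value: "p \<bullet> x' k = p \<bullet> x k"
    using sum_nonneg_eq_0_iff[of UNIV "\<lambda>i. p \<bullet> x' i - p \<bullet> x i"] supp[OF weak] by simp
  obtain e where "0 < e" and "u k (x k) \<le> u k (x' k - e *\<^sub>R g)"
    using concave_ext_superlevel_shift[OF conc strict edom_down] xdom strict by blast
  then have "p \<bullet> x k \<le> p \<bullet> (x' k - e *\<^sub>R g)"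
    using supp by blast
  then have "p \<bullet> x k \<le> p \<bullet> x' k - e * (g \<bullet> p)"
    by (simp add: inner_diff_right inner_commute[of p g])
  then show False
    using same_value mult_pos_pos[OF \<open>0 < e\<close> \<open>0 < g \<bullet> p\<close>] by simp
qed

definition improving_aggregate_trades ::
  "('i::finite \<Rightarrow> 'v::real_vector \<Rightarrow> ereal) \<Rightarrow> ('i \<Rightarrow> 'v) \<Rightarrow> 'v \<Rightarrow> 'v set" where
  "improving_aggregate_trades u x g =
     {(\<Sum>i\<in>UNIV. w i) - (\<Sum>i\<in>UNIV. x i) + r *\<^sub>R g | w r. 0 < r \<and> (\<forall>i. u i (x i) \<le> u i (w i))}"

lemma convex_improving_aggregate_trades:
  assumes "\<And>i. concave_ext (u i)"
  shows "convex (improving_aggregate_trades u x g)"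
proof (rule convexI)
  fix v1 v2 and s t :: real
  assume "v1 \<in> improving_aggregate_trades u x g" "v2 \<in> improving_aggregate_trades u x g"
    and st: "0 \<le> s" "0 \<le> t" "s + t = 1"
  then obtain w1 r1 w2 r2
    where v1: "v1 = (\<Sum>i\<in>UNIV. w1 i) - (\<Sum>i\<in>UNIV. x i) + r1 *\<^sub>R g"
      and v2: "v2 = (\<Sum>i\<in>UNIV. w2 i) - (\<Sum>i\<in>UNIV. x i) + r2 *\<^sub>R g"
      and r: "0 < r1" "0 < r2"
      and w: "\<forall>i. u i (x i) \<le> u i (w1 i)" "\<forall>i. u i (x i) \<le> u i (w2 i)"
    unfolding improving_aggregate_trades_def by blast
  define w where "w i = s *\<^sub>R w1 i + t *\<^sub>R w2 i" for i
  have "u i (x i) \<le> u i (w i)" for i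
  proof -
    have "convex {y. u i (x i) \<le> u i y}"
      by (rule concave_ext_superlevel_convex[OF assms])
    then show ?thesis
      using convexD w st by (fastforce simp: w_def)
  qed
  moreover have "0 < s * r1 + t * r2"
    using st r by (cases "s = 0") (auto intro: add_pos_nonneg)
  moreover have "s *\<^sub>R v1 + t *\<^sub>R v2
      = (\<Sum>i\<in>UNIV. w i) - (s + t) *\<^sub>R (\<Sum>i\<in>UNIV. x i) + (s * r1 + t * r2) *\<^sub>R g"
    unfolding v1 v2 w_def by (simp add: sum.distrib scaleR_sum_right algebra_simps)
  ultimately show "s *\<^sub>R v1 + t *\<^sub>R v2 \<in> improving_aggregate_trades u x g"
    unfolding improving_aggregate_trades_def using \<open>s + t = 1\<close> by auto
qed

lemma zero_notin_improving_aggregate_trades: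
  fixes u :: "'i::finite \<Rightarrow> 'v::real_vector \<Rightarrow> ereal"
  assumes "pareto_efficient u x"
    and mono_g: "\<And>i y r. y \<in> edom (u i) \<Longrightarrow> 0 < r \<Longrightarrow> u i y < u i (y + r *\<^sub>R g)"
    and xdom: "\<And>i. x i \<in> edom (u i)"
  shows "0 \<notin> improving_aggregate_trades u x g"
proof
  assume "0 \<in> improving_aggregate_trades u x g"
  then obtain w r where balance: "(\<Sum>i\<in>UNIV. w i) - (\<Sum>i\<in>UNIV. x i) + r *\<^sub>R g = 0"
    and "0 < r" and weak: "\<And>i. u i (x i) \<le> u i (w i)"
    unfolding improving_aggregate_trades_def by auto
  define x' where "x' i = w i + (r / CARD('i)) *\<^sub>R g" for i
  have "(\<Sum>i\<in>UNIV. x' i) = (\<Sum>i\<in>UNIV. x i)"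
    using balance by (simp add: x'_def sum.distrib sum_constant_scaleR algebra_simps)
  moreover have "u i (x i) < u i (x' i)" for i
  proof -
    have "w i \<in> edom (u i)"
      using xdom[of i] weak[of i] unfolding edom_def by (blast intro: order.strict_trans2)
    moreover have "0 < r / CARD('i)"
      using \<open>0 < r\<close> by simp
    ultimately show ?thesis
      unfolding x'_def using le_less_trans[OF weak mono_g] by blast
  qed
  ultimately show False
    using \<open>pareto_efficient u x\<close> unfolding pareto_efficient_def by (blast intro: less_imp_le)
qed

lemma pareto_efficient_imp_supporting_normal:
  fixes u :: "'i::finite \<Rightarrow> 'v::euclidean_space \<Rightarrow> ereal"
  assumes "\<And>i. concave_ext (u i)" and "pareto_efficient u x"
    and "\<And>i y r. y \<in> edom (u i) \<Longrightarrow> 0 < r \<Longrightarrow> u i y < u i (y + r *\<^sub>R g)"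
    and "\<And>i. x i \<in> edom (u i)"
  obtains a where "a \<noteq> 0" and "0 \<le> a \<bullet> g"
    and "\<And>w. \<forall>i. u i (x i) \<le> u i (w i) \<Longrightarrow> 0 \<le> a \<bullet> ((\<Sum>i\<in>UNIV. w i) - (\<Sum>i\<in>UNIV. x i))"
proof -
  obtain a where "a \<noteq> 0" and sep: "\<forall>v\<in>improving_aggregate_trades u x g. 0 \<le> a \<bullet> v"
    using separating_hyperplane_set_0[OF convex_improving_aggregate_trades
        zero_notin_improving_aggregate_trades] assms by blast
  have sep': "0 \<le> a \<bullet> ((\<Sum>i\<in>UNIV. w i) - (\<Sum>i\<in>UNIV. x i)) + r * (a \<bullet> g)"
    if "\<forall>i. u i (x i) \<le> u i (w i)" "0 < r" for w r
  proof -
    have "(\<Sum>i\<in>UNIV. w i) - (\<Sum>i\<in>UNIV. x i) + r *\<^sub>R g \<in> improving_aggregate_trades u x g"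
      using that unfolding improving_aggregate_trades_def by blast
    then have "0 \<le> a \<bullet> ((\<Sum>i\<in>UNIV. w i) - (\<Sum>i\<in>UNIV. x i) + r *\<^sub>R g)"
      using sep by blast
    then show ?thesis
      by (simp add: inner_add_right)
  qed
  have "0 \<le> a \<bullet> g"
    using sep'[of x 1] by simp
  moreover have "0 \<le> a \<bullet> ((\<Sum>i\<in>UNIV. w i) - (\<Sum>i\<in>UNIV. x i))"
    if weak: "\<forall>i. u i (x i) \<le> u i (w i)" for w
  proof (rule field_le_epsilon)
    fix e :: real
    assume "0 < e"
    define r where "r = e / (a \<bullet> g + 1)"
    have "0 < r" and "r * (a \<bullet> g) \<le> e"
      using \<open>0 < e\<close> \<open>0 \<le> a \<bullet> g\<close> by (simp_all add: r_def field_simps)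
    then show "0 \<le> a \<bullet> ((\<Sum>i\<in>UNIV. w i) - (\<Sum>i\<in>UNIV. x i)) + e"
      using sep'[OF weak \<open>0 < r\<close>] by linarith
  qed
  ultimately show thesis
    using that \<open>a \<noteq> 0\<close> by blast
qed

lemma supporting_normal_not_orthogonal:
  fixes u :: "'i::finite \<Rightarrow> 'v::real_inner \<Rightarrow> ereal"
  assumes "a \<noteq> 0" and "0 < \<epsilon>"
    and absorb: "\<And>z. norm z \<le> \<epsilon> \<Longrightarrow> \<exists>w s. (\<Sum>i\<in>UNIV. w i) + s *\<^sub>R g = (\<Sum>i\<in>UNIV. x i) + z
                   \<and> (\<forall>i. u i (x i) \<le> u i (w i))"
    and net: "\<And>w. \<forall>i. u i (x i) \<le> u i (w i) \<Longrightarrow> 0 \<le> a \<bullet> ((\<Sum>i\<in>UNIV. w i) - (\<Sum>i\<in>UNIV. x i))"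
  shows "a \<bullet> g \<noteq> 0"
proof
  assume "a \<bullet> g = 0"
  define z where "z = - (\<epsilon> / norm a) *\<^sub>R a"
  obtain w s where balance: "(\<Sum>i\<in>UNIV. w i) + s *\<^sub>R g = (\<Sum>i\<in>UNIV. x i) + z"
    and weak: "\<forall>i. u i (x i) \<le> u i (w i)"
    using absorb[of z] \<open>0 < \<epsilon>\<close> \<open>a \<noteq> 0\<close> by (auto simp: z_def)
  have "(\<Sum>i\<in>UNIV. w i) - (\<Sum>i\<in>UNIV. x i) = z - s *\<^sub>R g"
    using balance by (simp add: algebra_simps)
  then have "0 \<le> a \<bullet> (z - s *\<^sub>R g)"
    using net[OF weak] by simp
  also have "\<dots> = - (\<epsilon> / norm a) * (a \<bullet> a)"
    using \<open>a \<bullet> g = 0\<close> by (simp add: z_def inner_diff_right)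
  also have "\<dots> = - \<epsilon> * norm a"
    using \<open>a \<noteq> 0\<close> by (simp add: dot_square_norm power2_eq_square)
  finally show False
    using \<open>a \<noteq> 0\<close> \<open>0 < \<epsilon>\<close> by (simp add: mult_le_0_iff)
qed

lemma sum_UNIV_fun_upd:
  fixes f :: "'i::finite \<Rightarrow> 'a::ab_group_add"
  shows "(\<Sum>i\<in>UNIV. (f(k := v)) i) = (\<Sum>i\<in>UNIV. f i) - f k + v"
  by (simp add: sum.remove[of UNIV k] sum.remove[of UNIV k f])

lemma pareto_efficient_imp_supporting_price:
  fixes u :: "'i::finite \<Rightarrow> 'v::euclidean_space \<Rightarrow> ereal"
  assumes "\<And>i. concave_ext (u i)" and "pareto_efficient u x"
    and "\<And>i y r. y \<in> edom (u i) \<Longrightarrow> 0 < r \<Longrightarrow> u i y < u i (y + r *\<^sub>R g)"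
    and "\<And>i. x i \<in> edom (u i)"
    and "0 < \<epsilon>"
    and "\<And>z. norm z \<le> \<epsilon> \<Longrightarrow> \<exists>w s. (\<Sum>i\<in>UNIV. w i) + s *\<^sub>R g = (\<Sum>i\<in>UNIV. x i) + z
           \<and> (\<forall>i. u i (x i) \<le> u i (w i))"
  shows "\<exists>p. g \<bullet> p = 1 \<and> (\<forall>i w. u i (x i) \<le> u i w \<longrightarrow> p \<bullet> x i \<le> p \<bullet> w)"
proof -
  obtain a where "a \<noteq> 0" and "0 \<le> a \<bullet> g"
    and net: "\<And>w. \<forall>i. u i (x i) \<le> u i (w i) \<Longrightarrow> 0 \<le> a \<bullet> ((\<Sum>i\<in>UNIV. w i) - (\<Sum>i\<in>UNIV. x i))"
    using pareto_efficient_imp_supporting_normal[OF assms(1-4)] by blast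
  with supporting_normal_not_orthogonal[OF _ assms(5,6)] have "0 < a \<bullet> g"
    by fastforce
  define p where "p = a /\<^sub>R (a \<bullet> g)"
  have "g \<bullet> p = 1"
    using \<open>0 < a \<bullet> g\<close> by (simp add: p_def inner_commute)
  moreover have "p \<bullet> x i \<le> p \<bullet> w" if "u i (x i) \<le> u i w" for i w
  proof -
    have "0 \<le> a \<bullet> ((\<Sum>j\<in>UNIV. (x(i := w)) j) - (\<Sum>j\<in>UNIV. x j))"
      using that by (intro net) simp
    then have "0 \<le> a \<bullet> (w - x i)"
      unfolding sum_UNIV_fun_upd by simp
    then show ?thesis
      using \<open>0 < a \<bullet> g\<close> by (simp add: p_def inner_diff_right)
  qed
  ultimately show ?thesis
    by blast
qed

theorem corollary5p4:
  fixes u :: "'i::finite \<Rightarrow> real^'j::finite \<Rightarrow> ereal"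
    and g :: "real^'j"
    and x :: "'i \<Rightarrow> real^'j"
    and \<epsilon> :: real
  assumes no_pinf: "\<And>i w. u i w \<noteq> \<infinity>"
    and usc: "\<And>i. usc_ext (u i)"
    and conc: "\<And>i. concave_ext (u i)"
    and mono_g: "\<And>i xi r. xi \<in> edom (u i) \<Longrightarrow> r > 0 \<Longrightarrow> u i (xi + r *\<^sub>R g) > u i xi"
    and eps_pos: "\<epsilon> > 0"
    and finite_val: "\<And>z. norm z \<le> \<epsilon> \<Longrightarrow> opt_value u g x z \<noteq> \<infinity> \<and> opt_value u g x z \<noteq> -\<infinity>"
  shows "(pareto_efficient u x \<longrightarrow>
            (\<exists>p. g \<bullet> p = 1 \<and> (\<forall>i w. u i w \<ge> u i (x i) \<longrightarrow> p \<bullet> w \<ge> p \<bullet> x i)))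
       \<and> ((\<forall>i y. (\<exists>y'. y' \<in> edom (u i) \<and> u i y > u i y') \<longrightarrow>
                    (\<forall>\<^sub>F e in at_right 0. y - e *\<^sub>R g \<in> edom (u i)))
          \<longrightarrow> (\<exists>p. g \<bullet> p = 1 \<and> (\<forall>i w. u i w \<ge> u i (x i) \<longrightarrow> p \<bullet> w \<ge> p \<bullet> x i))
          \<longrightarrow> pareto_efficient u x)"
proof -
  have xdom: "x i \<in> edom (u i)" for i
    using finite_val[of 0] eps_pos by (intro edom_if_opt_value_zero_neq_PInfty[where g = g]) simp
  have "\<exists>p. g \<bullet> p = 1 \<and> (\<forall>i w. u i (x i) \<le> u i w \<longrightarrow> p \<bullet> x i \<le> p \<bullet> w)"
    if "pareto_efficient u x"
    using pareto_efficient_imp_supporting_price[OF conc that mono_g xdom eps_pos]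
      finite_val opt_value_neq_MInfty_imp_absorbable by blast
  moreover have "pareto_efficient u x"
    if "\<forall>i y. (\<exists>y'. y' \<in> edom (u i) \<and> u i y > u i y') \<longrightarrow>
                    (\<forall>\<^sub>F e in at_right 0. y - e *\<^sub>R g \<in> edom (u i))"
      and "g \<bullet> p = 1" and "\<forall>i w. u i (x i) \<le> u i w \<longrightarrow> p \<bullet> x i \<le> p \<bullet> w" for p
    using that by (intro supporting_price_imp_pareto_efficient[OF conc _ xdom]) auto
  ultimately show ?thesis
    by blast
qed

end
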